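(* Let $u\in\mathbb{N}^m$ and put $M:=\{x\in\mathbb{R}^m:0\leq x\leq u\}$ (entrywise order). Any finite $C\subseteq M$ with $\min\{\|x-y\|_\infty:x,y\in C,x\neq y\}>1$ satisfies $|C|\leq\prod_{i=1}^m u_i$. *)

theory Defs
  imports "HOL-Analysis.Analysis"
begin

definition linf_dist :: "real ^ 'm \<Rightarrow> real ^ 'm \<Rightarrow> real" where
  "linf_dist x y = Max (range (\<lambda>i. \<bar>x $ i - y $ i\<bar>))"

definition box_M :: "('m \<Rightarrow> nat) \<Rightarrow> (real ^ 'm) set" where
  "box_M u = {x. \<forall>i. 0 \<le> x $ i \<and> x $ i \<le> real (u i)}"

end

theory Submission
  imports Defs
begin

text \<open>Cut the box into the \<open>\<Prod>i. u i\<close> closed unit cubes with integer corners. Two points of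
  the same cube are at sup-distance at most 1, so the separated set \<open>C\<close> meets every cube in at
  most one point, and sending a point to (the index of) a cube containing it is injective on \<open>C\<close>.\<close>

lemma linf_dist_le_iff: "linf_dist x y \<le> r \<longleftrightarrow> (\<forall>i. \<bar>x $ i - y $ i\<bar> \<le> r)"
  unfolding linf_dist_def by (subst Max_le_iff) auto

text \<open>The truncation makes the right endpoint \<open>n\<close> lie in the last cell \<open>[n - 1, n]\<close>.\<close>
definition cell_index :: "nat \<Rightarrow> real \<Rightarrow> nat" where
  "cell_index n a = min (nat \<lfloor>a\<rfloor>) (n - 1)"

lemma cell_index_less: "n \<ge> 1 \<Longrightarrow> cell_index n a < n"
  unfolding cell_index_def by linarith

lemma cell_index_bounds:
  assumes "0 \<le> a" "a \<le> real n" "n \<ge> 1"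
  shows "real (cell_index n a) \<le> a" "a \<le> real (cell_index n a) + 1"
proof -
  have "real (nat \<lfloor>a\<rfloor>) \<le> a" "a < real (nat \<lfloor>a\<rfloor>) + 1"
    using assms(1) by linarith+
  moreover have "real (n - 1) \<le> a" if "n - 1 < nat \<lfloor>a\<rfloor>"
    using that assms(1) by linarith
  ultimately show "real (cell_index n a) \<le> a" "a \<le> real (cell_index n a) + 1"
    using assms unfolding cell_index_def min_def by (auto simp: of_nat_diff)
qed

lemma same_cell_index_imp_dist_le_1:
  assumes "0 \<le> a" "a \<le> real n" "0 \<le> b" "b \<le> real n" "n \<ge> 1"
    and "cell_index n a = cell_index n b"
  shows "\<bar>a - b\<bar> \<le> 1"
  using cell_index_bounds[of a n] cell_index_bounds[of b n] assms by (simp add: abs_le_iff)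

theorem lemma4p4:
  fixes u :: "'m::finite \<Rightarrow> nat" and C :: "(real ^ 'm) set"
  assumes upos: "\<forall>i. u i \<ge> 1"
    and "finite C" and "C \<subseteq> box_M u"
    and sep: "\<forall>x\<in>C. \<forall>y\<in>C. x \<noteq> y \<longrightarrow> linf_dist x y > 1"
  shows "card C \<le> (\<Prod>i\<in>UNIV. u i)"
proof -
  define cell where "cell x = (\<lambda>i. cell_index (u i) (x $ i))" for x :: "real ^ 'm"
  have "inj_on cell C"
  proof (rule inj_onI, rule ccontr)
    fix x y assume "x \<in> C" "y \<in> C" "cell x = cell y" "x \<noteq> y"
    then have "\<bar>x $ i - y $ i\<bar> \<le> 1" for i
      using \<open>C \<subseteq> box_M u\<close> upos same_cell_index_imp_dist_le_1[of "x $ i" "u i" "y $ i"]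
      by (auto simp: box_M_def cell_def dest!: fun_cong[of _ _ i])
    with \<open>x \<in> C\<close> \<open>y \<in> C\<close> \<open>x \<noteq> y\<close> sep show False
      by (meson linf_dist_le_iff not_le)
  qed
  moreover have "cell ` C \<subseteq> Pi\<^sub>E UNIV (\<lambda>i. {..<u i})"
    using upos cell_index_less by (auto simp: cell_def)
  ultimately have "card C \<le> card (Pi\<^sub>E UNIV (\<lambda>i. {..<u i}))"
    by (simp add: card_image[symmetric] card_mono finite_PiE)
  then show ?thesis
    by (simp add: card_PiE)
qed

end
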